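(* Let $R\subset S$ be an FCP ring extension and let $\mathcal E$ be the set of essential elements of $[R,S]$. Then $\mathcal S[R,S]=\bigcap_{E\in\mathcal E}E$, and $\mathcal S[R,S]$ is the least element of $\mathcal E$.
   Context: All rings are commutative with identity. $[R,S]$ is the lattice of $R$-subalgebras of $S$ (meet = intersection, join = product). FCP: every chain in $[R,S]$ is finite. $T\subset U$ minimal means $[T,U]=\{T,U\}$; an atom of $[R,S]$ is $T$ with $R\subset T$ minimal; the socle $\mathcal S[R,S]$ is the product of all atoms of $[R,S]$. An element $T\in[R,S]$ is essential if $T\neq R$ and $U\cap T\neq R$ for every $U\in[R,S]$ with $U\neq R$. *)

theory Defs
  imports Main
begin

(* The ambient ring S is the whole type 'a :: comm_ring_1; R is a subring of S.
   R-subalgebras of S are exactly the subrings of S containing R. *)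

definition is_subring :: "'a::comm_ring_1 set \<Rightarrow> bool" where
  "is_subring A \<longleftrightarrow> 1 \<in> A \<and> (\<forall>x\<in>A. \<forall>y\<in>A. x + y \<in> A \<and> x * y \<in> A) \<and> (\<forall>x\<in>A. - x \<in> A)"

definition interval :: "'a::comm_ring_1 set \<Rightarrow> 'a set set" where
  "interval R = {T. is_subring T \<and> R \<subseteq> T}"

definition FCP :: "'a::comm_ring_1 set \<Rightarrow> bool" where
  "FCP R \<longleftrightarrow> (\<forall>C. C \<subseteq> interval R \<and> Complete_Partial_Order.chain (\<subseteq>) C \<longrightarrow> finite C)"

definition minimal_ext :: "'a::comm_ring_1 set \<Rightarrow> 'a set \<Rightarrow> bool" where
  "minimal_ext T U \<longleftrightarrow> T \<subset> U \<and> {V \<in> interval T. V \<subseteq> U} = {T, U}"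

definition atom :: "'a::comm_ring_1 set \<Rightarrow> 'a set \<Rightarrow> bool" where
  "atom R T \<longleftrightarrow> T \<in> interval R \<and> minimal_ext R T"

(* subring generated by a set: the product (join) in [R,S] *)
definition ring_gen :: "'a::comm_ring_1 set \<Rightarrow> 'a set" where
  "ring_gen A = \<Inter>{T. is_subring T \<and> A \<subseteq> T}"

(* socle: product of all atoms of [R,S] (taken in [R,S], so it contains R) *)
definition socle :: "'a::comm_ring_1 set \<Rightarrow> 'a set" where
  "socle R = ring_gen (R \<union> \<Union>{T. atom R T})"

definition essential :: "'a::comm_ring_1 set \<Rightarrow> 'a set \<Rightarrow> bool" where
  "essential R T \<longleftrightarrow> T \<in> interval R \<and> T \<noteq> R \<and>
     (\<forall>U\<in>interval R. U \<noteq> R \<longrightarrow> U \<inter> T \<noteq> R)"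

end

theory Submission
  imports Defs
begin

(* In an FCP extension strict inclusion is well-founded on [R,S], so every U \<noteq> R in [R,S]
   contains an atom. If T \<in> [R,S] meets an atom A in more than R, then A \<inter> T \<in> [R,A] = {R,A}
   forces A \<subseteq> T. Hence the essential elements are exactly the T \<noteq> R containing all atoms,
   i.e. the elements T \<noteq> R above the socle. Since R \<noteq> S there is an atom, so the socle
   itself is \<noteq> R: it is the least essential element, hence also their intersection. *)

lemma wf_less_if_finite_chains:
  fixes A :: "'a::order set"
  assumes finite_chains: "\<And>C. C \<subseteq> A \<Longrightarrow> Complete_Partial_Order.chain (\<le>) C \<Longrightarrow> finite C"
  shows "wf {(x, y). x \<in> A \<and> y \<in> A \<and> x < y}"
  unfolding wf_iff_no_infinite_down_chain
proof
  assume "\<exists>f. \<forall>i. (f (Suc i), f i) \<in> {(x, y). x \<in> A \<and> y \<in> A \<and> x < y}"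
  then obtain f where f_in: "\<And>i. f i \<in> A" and f_desc: "\<And>i. f (Suc i) < f i"
    by blast
  have antimono: "m \<le> n \<Longrightarrow> f n \<le> f m" for m n
    by (rule lift_Suc_antimono_le) (use f_desc less_imp_le in auto)
  have "f n < f m" if "m < n" for m n
    using antimono[of "Suc m" n] f_desc[of m] that by simp
  then have "inj f"
    by (metis injI less_irrefl nat_neq_iff)
  then have "infinite (range f)"
    using finite_imageD by blast
  moreover have "Complete_Partial_Order.chain (\<le>) (range f)"
    unfolding chain_def using antimono by (metis image_iff nat_le_linear)
  ultimately show False
    using finite_chains f_in by blast
qed

lemma is_subring_ring_gen: "is_subring (ring_gen A)"
  unfolding ring_gen_def is_subring_def by blast

lemma ring_gen_superset: "A \<subseteq> ring_gen A"
  unfolding ring_gen_def by blast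

lemma ring_gen_least: "is_subring T \<Longrightarrow> A \<subseteq> T \<Longrightarrow> ring_gen A \<subseteq> T"
  unfolding ring_gen_def by blast

lemma is_subring_UNIV: "is_subring (UNIV :: 'a::comm_ring_1 set)"
  unfolding is_subring_def by blast

lemma interval_Int: "T \<in> interval R \<Longrightarrow> U \<in> interval R \<Longrightarrow> T \<inter> U \<in> interval R"
  unfolding interval_def is_subring_def by blast

lemma atom_imp_psubset: "atom R A \<Longrightarrow> R \<subset> A"
  unfolding atom_def minimal_ext_def by blast

lemma atom_subset_if_Int_ne:
  assumes "atom R A" and "T \<in> interval R" and "A \<inter> T \<noteq> R"
  shows "A \<subseteq> T"
proof -
  have "A \<inter> T \<in> {V \<in> interval R. V \<subseteq> A}"
    using assms(1,2) interval_Int unfolding atom_def by blast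
  also have "\<dots> = {R, A}"
    using assms(1) unfolding atom_def minimal_ext_def by blast
  finally show ?thesis
    using assms(3) by blast
qed

lemma exists_atom_subset:
  fixes R :: "'a::comm_ring_1 set"
  assumes "is_subring R" and "FCP R" and "U \<in> interval R" and "U \<noteq> R"
  obtains A where "atom R A" and "A \<subseteq> U"
proof -
  let ?X = "{V \<in> interval R. R \<subset> V \<and> V \<subseteq> U}"
  let ?less = "{(V, W). V \<in> interval R \<and> W \<in> interval R \<and> V \<subset> W}"
  have "wf ?less"
    using assms(2) unfolding FCP_def by (intro wf_less_if_finite_chains) blast
  moreover have "U \<in> ?X"
    using assms(3,4) unfolding interval_def by blast
  ultimately obtain A where A_in: "A \<in> ?X"
    and A_min: "\<And>V. (V, A) \<in> ?less \<Longrightarrow> V \<notin> ?X"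
    by (rule wfE_min) blast
  have "V \<in> {R, A}" if "V \<in> interval R" and "V \<subseteq> A" for V
  proof (rule ccontr)
    assume "V \<notin> {R, A}"
    then have "V \<in> ?X" and "V \<subset> A"
      using that A_in unfolding interval_def by auto
    with A_min[of V] that A_in show False
      by blast
  qed
  moreover have "R \<in> interval R"
    using assms(1) unfolding interval_def by blast
  ultimately have "{V \<in> interval R. V \<subseteq> A} = {R, A}"
    using A_in by blast
  then have "atom R A"
    using A_in unfolding atom_def minimal_ext_def by blast
  with A_in show thesis
    using that by blast
qed

lemma essential_iff_atoms_subset:
  fixes R :: "'a::comm_ring_1 set"
  assumes "is_subring R" and "FCP R"
  shows "essential R T \<longleftrightarrow> T \<in> interval R \<and> T \<noteq> R \<and> (\<forall>A. atom R A \<longrightarrow> A \<subseteq> T)"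
proof
  assume "essential R T"
  then have T: "T \<in> interval R" "T \<noteq> R"
    and meets: "\<And>U. U \<in> interval R \<Longrightarrow> U \<noteq> R \<Longrightarrow> U \<inter> T \<noteq> R"
    unfolding essential_def by auto
  have "A \<subseteq> T" if "atom R A" for A
  proof (rule atom_subset_if_Int_ne[OF that T(1) meets])
    show "A \<in> interval R" and "A \<noteq> R"
      using that atom_imp_psubset unfolding atom_def by blast+
  qed
  with T show "T \<in> interval R \<and> T \<noteq> R \<and> (\<forall>A. atom R A \<longrightarrow> A \<subseteq> T)"
    by blast
next
  assume "T \<in> interval R \<and> T \<noteq> R \<and> (\<forall>A. atom R A \<longrightarrow> A \<subseteq> T)"
  then have T: "T \<in> interval R" "T \<noteq> R" and atoms: "\<And>A. atom R A \<Longrightarrow> A \<subseteq> T"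
    by auto
  have "U \<inter> T \<noteq> R" if U: "U \<in> interval R" "U \<noteq> R" for U
  proof -
    obtain A where A: "atom R A" "A \<subseteq> U"
      using exists_atom_subset[OF assms U] .
    then have "A \<subseteq> U \<inter> T"
      using atoms by blast
    with atom_imp_psubset[OF A(1)] show ?thesis
      by blast
  qed
  with T show "essential R T"
    unfolding essential_def by blast
qed

lemma socle_in_interval: "socle R \<in> interval R"
proof -
  have "R \<subseteq> socle R"
    unfolding socle_def using ring_gen_superset by blast
  then show ?thesis
    unfolding interval_def socle_def using is_subring_ring_gen by blast
qed

lemma atom_subset_socle:
  assumes "atom R A"
  shows "A \<subseteq> socle R"
proof -
  have "A \<subseteq> R \<union> \<Union>{T. atom R T}"
    using assms by blast
  then show ?thesis
    unfolding socle_def using ring_gen_superset by blast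
qed

lemma socle_subset:
  assumes "T \<in> interval R" and "\<And>A. atom R A \<Longrightarrow> A \<subseteq> T"
  shows "socle R \<subseteq> T"
  unfolding socle_def
proof (rule ring_gen_least)
  show "is_subring T" and "R \<union> \<Union>{T. atom R T} \<subseteq> T"
    using assms unfolding interval_def by blast+
qed

theorem proposition8p111:
  fixes R :: "'a::comm_ring_1 set"
  assumes "is_subring R" and "R \<noteq> UNIV" and "FCP R"
  shows "socle R = \<Inter>{E. essential R E}
    \<and> essential R (socle R) \<and> (\<forall>E. essential R E \<longrightarrow> socle R \<subseteq> E)"
proof -
  note essential_iff = essential_iff_atoms_subset[OF assms(1,3)]
  have "UNIV \<in> interval R"
    using is_subring_UNIV unfolding interval_def by blast
  then obtain A where "atom R A"
    using exists_atom_subset[OF assms(1,3)] assms(2) by metis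
  then have "socle R \<noteq> R"
    using atom_imp_psubset atom_subset_socle by blast
  then have socle_essential: "essential R (socle R)"
    unfolding essential_iff using socle_in_interval atom_subset_socle by blast
  have socle_least: "socle R \<subseteq> E" if "essential R E" for E
    using that socle_subset unfolding essential_iff by blast
  have "socle R = \<Inter>{E. essential R E}"
    using socle_essential socle_least by (intro antisym Inter_greatest Inter_lower) auto
  with socle_essential socle_least show ?thesis
    by blast
qed

end
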